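(* Let $f:[0,1]\to[0,1]$ be a continuous surjective function that does not admit a splitting sequence. If $f$ admits a fixed point $d$ that is S-type, M-type or W-type, then $$\varprojlim f=\varprojlim([0,d],f|_{[0,d]})\cup\varprojlim([d,1],f|_{[d,1]})$$ and $$\varprojlim([0,d],f|_{[0,d]})\cap\varprojlim([d,1],f|_{[d,1]})=\{(d,d,\dots)\}.$$
   Context: $\varprojlim f=\{\mathbf x=(x_0,x_1,\dots)\in[0,1]^{\mathbb N}: f(x_{n+1})=x_n\ \forall n\}$; for a closed interval $J\subseteq[0,1]$, $\varprojlim(J,f|_J)=\{\mathbf x\in\varprojlim f: x_n\in J\ \forall n\}$. Fixed-point types: let $c<d<e$ in $[0,1]$ with $d$ a fixed point, $d$ the only fixed point in $(c,e)$, $c=0$ or $c$ a fixed point, and $e=1$ or $e$ a fixed point. Then $d$ is S-type if $f(x)\le x$ for all $x\in[c,d]$ and $f(x)\ge x$ for all $x\in[d,e]$; N-type if $f(x)\ge x$ on $[c,d]$ and $f(x)\le x$ on $[d,e]$; M-type if $f(x)\ge x$ for all $x\in[c,e]$; W-type if $f(x)\le x$ for all $x\in[c,e]$. (The type is witnessed by $(c,e)$; $d$ has a given type if such $c,e$ exist.) A sequence $(T_n)_{n\in\mathbb N}$ of closed intervals $T_n\subsetneq[0,1]$ (possibly degenerate) is tight if $f(T_{n+1})=T_n$ for every $n$ and $T_n$ is nondegenerate for all sufficiently large $n$. A tight sequence $(T_n)$, $T_n=[l_n,r_n]$, is a splitting sequence admitted by $f$ if there are an infinite set $N\subseteq\mathbb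 N$ and nondegenerate closed intervals $S_n\subseteq[0,1]$ ($n\in N$) with $S_n\cap T_n\subseteq\{l_n,r_n\}$ and $f(S_n)=f(T_n)$ for all $n\in N$. *)

theory Defs
  imports "HOL-Analysis.Analysis"
begin

definition invlim :: "(real \<Rightarrow> real) \<Rightarrow> (nat \<Rightarrow> real) set" where
  "invlim f = {x. (\<forall>n. x n \<in> {0..1}) \<and> (\<forall>n. f (x (Suc n)) = x n)}"

definition invlim_on :: "real set \<Rightarrow> (real \<Rightarrow> real) \<Rightarrow> (nat \<Rightarrow> real) set" where
  "invlim_on J f = {x \<in> invlim f. \<forall>n. x n \<in> J}"

definition fp_frame :: "(real \<Rightarrow> real) \<Rightarrow> real \<Rightarrow> real \<Rightarrow> real \<Rightarrow> bool" where
  "fp_frame f c d e \<longleftrightarrow> 0 \<le> c \<and> c < d \<and> d < e \<and> e \<le> 1 \<and> f d = d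
     \<and> (\<forall>y\<in>{c<..<e}. f y = y \<longrightarrow> y = d)
     \<and> (c = 0 \<or> f c = c) \<and> (e = 1 \<or> f e = e)"

definition S_type :: "(real \<Rightarrow> real) \<Rightarrow> real \<Rightarrow> bool" where
  "S_type f d \<longleftrightarrow> (\<exists>c e. fp_frame f c d e \<and> (\<forall>x\<in>{c..d}. f x \<le> x) \<and> (\<forall>x\<in>{d..e}. f x \<ge> x))"

definition N_type :: "(real \<Rightarrow> real) \<Rightarrow> real \<Rightarrow> bool" where
  "N_type f d \<longleftrightarrow> (\<exists>c e. fp_frame f c d e \<and> (\<forall>x\<in>{c..d}. f x \<ge> x) \<and> (\<forall>x\<in>{d..e}. f x \<le> x))"

definition M_type :: "(real \<Rightarrow> real) \<Rightarrow> real \<Rightarrow> bool" where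
  "M_type f d \<longleftrightarrow> (\<exists>c e. fp_frame f c d e \<and> (\<forall>x\<in>{c..e}. f x \<ge> x))"

definition W_type :: "(real \<Rightarrow> real) \<Rightarrow> real \<Rightarrow> bool" where
  "W_type f d \<longleftrightarrow> (\<exists>c e. fp_frame f c d e \<and> (\<forall>x\<in>{c..e}. f x \<le> x))"

definition tight :: "(real \<Rightarrow> real) \<Rightarrow> (nat \<Rightarrow> real) \<Rightarrow> (nat \<Rightarrow> real) \<Rightarrow> bool" where
  "tight f l r \<longleftrightarrow>
     (\<forall>n. 0 \<le> l n \<and> l n \<le> r n \<and> r n \<le> 1 \<and> {l n..r n} \<noteq> {0..1})
   \<and> (\<forall>n. f ` {l (Suc n)..r (Suc n)} = {l n..r n})
   \<and> (\<exists>M. \<forall>n\<ge>M. l n < r n)"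

definition splitting_sequence :: "(real \<Rightarrow> real) \<Rightarrow> (nat \<Rightarrow> real) \<Rightarrow> (nat \<Rightarrow> real) \<Rightarrow> bool" where
  "splitting_sequence f l r \<longleftrightarrow> tight f l r \<and>
     (\<exists>N::nat set. infinite N \<and> (\<exists>a b :: nat \<Rightarrow> real. \<forall>n\<in>N.
        0 \<le> a n \<and> a n < b n \<and> b n \<le> 1
        \<and> {a n..b n} \<inter> {l n..r n} \<subseteq> {l n, r n}
        \<and> f ` {a n..b n} = f ` {l n..r n}))"

definition admits_splitting_sequence :: "(real \<Rightarrow> real) \<Rightarrow> bool" where
  "admits_splitting_sequence f \<longleftrightarrow> (\<exists>l r. splitting_sequence f l r)"

end

theory Submission
  imports Defs
begin

text \<open>
  An S-, M- or W-type fixed point d is repelling on at least one side; say f z \<ge> z on [d, e]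
  (the other side is the mirror image under z \<mapsto> 1 - z). Suppose some y \<in> [0, 1] were mapped
  strictly across d. Choosing t(n+1) as the least point above d with f t(n+1) = t(n) gives a tight
  sequence [d, t(n)] with f [d, t(n+1)] = [d, t(n)], and the intermediate value theorem applied between
  y and either t(n+1) or d yields intervals meeting [d, t(n+1)] at most in an endpoint that are also
  mapped onto [d, t(n)]: a splitting sequence. So f maps [0, d] into [0, d] and [d, 1] into [d, 1].
  Since a thread of the inverse limit is determined backwards by f, a coordinate on one side of d
  forces all earlier coordinates onto that side, so no thread can visit both open sides.
\<close>

lemma image_interval_contains_between:
  fixes f :: "real \<Rightarrow> real"
  assumes "continuous_on {p..q} f" and "p \<le> q"
  shows "{min (f p) (f q)..max (f p) (f q)} \<subseteq> f ` {p..q}"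
proof -
  have "connected (f ` {p..q})"
    using assms(1) by (rule connected_continuous_image) simp
  moreover have "f p \<in> f ` {p..q}" "f q \<in> f ` {p..q}" using assms(2) by auto
  ultimately show ?thesis by (cases "f p \<le> f q") (auto dest: connected_contains_Icc)
qed

lemma least_preimage_point:
  fixes f :: "real \<Rightarrow> real"
  assumes "continuous_on {a..b} f" and "x \<in> {a..b}" and "f x = v"
  shows "\<exists>z\<in>{a..x}. f z = v \<and> (\<forall>w\<in>{a..<z}. f w \<noteq> v)"
proof -
  define S where "S = {w \<in> {a..x}. f w = v}"
  have "x \<in> S" using assms(2,3) by (simp add: S_def)
  have "bdd_below S" by (rule bdd_belowI[of _ a]) (simp add: S_def)
  moreover have "closed S" unfolding S_def
    using assms(2) by (intro continuous_closed_preimage_constant continuous_on_subset[OF assms(1)]) auto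
  ultimately have "Inf S \<in> S" using \<open>x \<in> S\<close> closed_contains_Inf by blast
  moreover have "f w \<noteq> v" if "w \<in> {a..<Inf S}" for w
  proof
    assume "f w = v"
    with that \<open>Inf S \<in> S\<close> have "w \<in> S" by (simp add: S_def)
    then show False using that cInf_lower[OF _ \<open>bdd_below S\<close>] by fastforce
  qed
  ultimately show ?thesis unfolding S_def by blast
qed

lemma greatest_preimage_point:
  fixes f :: "real \<Rightarrow> real"
  assumes "continuous_on {a..b} f" and "x \<in> {a..b}" and "f x = v"
  shows "\<exists>z\<in>{x..b}. f z = v \<and> (\<forall>w\<in>{z<..b}. f w \<noteq> v)"
proof -
  define S where "S = {w \<in> {x..b}. f w = v}"
  have "x \<in> S" using assms(2,3) by (simp add: S_def)
  have "bdd_above S" by (rule bdd_aboveI[of _ b]) (simp add: S_def)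
  moreover have "closed S" unfolding S_def
    using assms(2) by (intro continuous_closed_preimage_constant continuous_on_subset[OF assms(1)]) auto
  ultimately have "Sup S \<in> S" using \<open>x \<in> S\<close> closed_contains_Sup by blast
  moreover have "f w \<noteq> v" if "w \<in> {Sup S<..b}" for w
  proof
    assume "f w = v"
    with that \<open>Sup S \<in> S\<close> have "w \<in> S" by (simp add: S_def)
    then show False using that cSup_upper[OF _ \<open>bdd_above S\<close>] by fastforce
  qed
  ultimately show ?thesis unfolding S_def by blast
qed

lemma IVT_least_point:
  fixes f :: "real \<Rightarrow> real"
  assumes cont: "continuous_on {a..b} f" and "a \<le> b" and "f a < v" and "v \<le> f b"
  shows "\<exists>z\<in>{a<..b}. f z = v \<and> (\<forall>w\<in>{a..<z}. f w < v)"
proof -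
  obtain x where x: "x \<in> {a..b}" "f x = v"
    using IVT'[of f a v b] cont assms(2-4) by fastforce
  then obtain z where z: "z \<in> {a..x}" "f z = v" and before: "\<forall>w\<in>{a..<z}. f w \<noteq> v"
    using least_preimage_point[OF cont] by blast
  have "f w < v" if w: "w \<in> {a..<z}" for w
  proof (rule ccontr)
    assume "\<not> f w < v"
    moreover have "continuous_on {a..w} f"
      using cont x z w by (auto intro: continuous_on_subset)
    ultimately have "v \<in> f ` {a..w}"
      using image_interval_contains_between[of a w f] w \<open>f a < v\<close> by auto
    then show False using before w by auto
  qed
  moreover have "z \<noteq> a" using z \<open>f a < v\<close> by auto
  ultimately show ?thesis using x z by auto
qed

lemma separated_preimage_points:
  fixes f :: "real \<Rightarrow> real"
  assumes cont: "continuous_on {u..w} f" and "u < w" and "f u = g" and "f w = h" and "g \<noteq> h"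
  shows "\<exists>a b. u \<le> a \<and> a < b \<and> b \<le> w \<and> f a = g \<and> f b = h
    \<and> (\<forall>z\<in>{a<..<b}. f z \<noteq> g \<and> f z \<noteq> h)"
proof -
  obtain b where b: "b \<in> {u..w}" "f b = h" and hb: "\<forall>z\<in>{u..<b}. f z \<noteq> h"
    using least_preimage_point[OF cont, of w h] assms(2,4) by auto
  have "continuous_on {u..b} f" using cont b by (auto intro: continuous_on_subset)
  then obtain a where a: "a \<in> {u..b}" "f a = g" and ga: "\<forall>z\<in>{a<..b}. f z \<noteq> g"
    using greatest_preimage_point[of u b f u g] b assms(3) by auto
  have "a \<noteq> b" using a(2) b(2) \<open>g \<noteq> h\<close> by blast
  with a(1) have "a < b" by simp
  moreover have "f z \<noteq> g \<and> f z \<noteq> h" if "z \<in> {a<..<b}" for z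
    using that a(1) ga hb by simp
  ultimately show ?thesis using a b by (intro exI[of _ a] exI[of _ b]) auto
qed

lemma image_eq_between_separated_points:
  fixes f :: "real \<Rightarrow> real"
  assumes cont: "continuous_on {a..b} f" and "a < b" and fa: "f a = g" and fb: "f b = h"
    and "g \<noteq> h" and avoid: "\<forall>z\<in>{a<..<b}. f z \<noteq> g \<and> f z \<noteq> h"
  shows "f ` {a..b} = {min g h..max g h}"
proof
  show "{min g h..max g h} \<subseteq> f ` {a..b}"
    using image_interval_contains_between[OF cont] \<open>a < b\<close> fa fb by simp
  show "f ` {a..b} \<subseteq> {min g h..max g h}"
  proof (rule image_subsetI)
    fix z assume z: "z \<in> {a..b}"
    show "f z \<in> {min g h..max g h}"
    proof (rule ccontr)
      assume out: "f z \<notin> {min g h..max g h}"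
      then have "z \<noteq> a" "z \<noteq> b" using fa fb by auto
      with z have z_inner: "z \<in> {a<..<b}" by auto
      have "continuous_on {a..z} f" "continuous_on {z..b} f"
        using cont z by (auto intro: continuous_on_subset)
      then have "{min g (f z)..max g (f z)} \<subseteq> f ` {a..z}" "{min (f z) h..max (f z) h} \<subseteq> f ` {z..b}"
        using image_interval_contains_between[of a z f] image_interval_contains_between[of z b f]
          z fa fb by auto
      \<comment> \<open>g or h lies between f z and the value at the opposite end, so it is attained inside.\<close>
      moreover have "g \<in> {min (f z) h..max (f z) h} \<or> h \<in> {min g (f z)..max g (f z)}"
        using out by auto
      ultimately obtain x where x: "x \<in> {z..b} \<and> f x = g \<or> x \<in> {a..z} \<and> f x = h"
        by blast
      moreover have "x \<noteq> z" "f x = g \<Longrightarrow> x \<noteq> b" "f x = h \<Longrightarrow> x \<noteq> a"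
        using x out fa fb \<open>g \<noteq> h\<close> by auto
      ultimately have "x \<in> {a<..<b}" "f x = g \<or> f x = h" using z_inner by auto
      then show False using avoid by blast
    qed
  qed
qed

lemma subinterval_with_image:
  fixes f :: "real \<Rightarrow> real"
  assumes cont: "continuous_on {p..q} f" and "\<alpha> < \<beta>"
    and "\<alpha> \<in> f ` {p..q}" and "\<beta> \<in> f ` {p..q}"
  shows "\<exists>a b. p \<le> a \<and> a < b \<and> b \<le> q \<and> f ` {a..b} = {\<alpha>..\<beta>}"
proof -
  have between: "\<exists>a b. p \<le> a \<and> a < b \<and> b \<le> q \<and> f ` {a..b} = {\<alpha>..\<beta>}"
    if "p \<le> s" "s < t" "t \<le> q" and ends: "{f s, f t} = {\<alpha>, \<beta>}" for s t
  proof -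
    have cont_st: "continuous_on {s..t} f" using cont that by (auto intro: continuous_on_subset)
    have "f s \<noteq> f t" using ends \<open>\<alpha> < \<beta>\<close> by auto
    then obtain a b where ab: "s \<le> a" "a < b" "b \<le> t" "f a = f s" "f b = f t"
      and avoid: "\<forall>z\<in>{a<..<b}. f z \<noteq> f s \<and> f z \<noteq> f t"
      using separated_preimage_points[OF cont_st \<open>s < t\<close>] by blast
    have "continuous_on {a..b} f" using cont_st ab by (auto intro: continuous_on_subset)
    then have "f ` {a..b} = {min (f s) (f t)..max (f s) (f t)}"
      using image_eq_between_separated_points ab avoid \<open>f s \<noteq> f t\<close> by blast
    also have "\<dots> = {\<alpha>..\<beta>}" using ends \<open>\<alpha> < \<beta>\<close> by (auto simp: doubleton_eq_iff)
    finally show ?thesis using ab that by (intro exI[of _ a] exI[of _ b]) auto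
  qed
  obtain u w where uw: "u \<in> {p..q}" "f u = \<alpha>" "w \<in> {p..q}" "f w = \<beta>"
    using assms(3,4) by blast
  then have "u < w \<or> w < u" using \<open>\<alpha> < \<beta>\<close> by (cases u w rule: linorder_cases) auto
  then show ?thesis
    using between[of u w] between[of w u] uw by (auto simp: insert_commute)
qed

definition maps_across :: "(real \<Rightarrow> real) \<Rightarrow> real \<Rightarrow> real \<Rightarrow> bool" where
  "maps_across f d y \<longleftrightarrow> (d < y \<and> f y < d) \<or> (y < d \<and> d < f y)"

lemma admits_splitting_sequenceI:
  assumes "tight f l r" and "infinite N"
    and "\<And>n. n \<in> N \<Longrightarrow> \<exists>a b. 0 \<le> a \<and> a < b \<and> b \<le> 1
      \<and> {a..b} \<inter> {l n..r n} \<subseteq> {l n, r n} \<and> f ` {a..b} = f ` {l n..r n}"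
  shows "admits_splitting_sequence f"
proof -
  obtain a b where "\<forall>n\<in>N. 0 \<le> a n \<and> a n < b n \<and> b n \<le> 1
      \<and> {a n..b n} \<inter> {l n..r n} \<subseteq> {l n, r n} \<and> f ` {a n..b n} = f ` {l n..r n}"
    using assms(3) by metis
  then show ?thesis
    using assms(1,2) unfolding admits_splitting_sequence_def splitting_sequence_def by blast
qed

lemma preimage_interval_step:
  fixes f :: "real \<Rightarrow> real"
  assumes cont: "continuous_on {d..s} f" and fd: "f d = d" and "d < s"
    and above: "\<forall>z\<in>{d..s}. z \<le> f z"
  shows "\<exists>z. d < z \<and> z \<le> s \<and> f z = s \<and> f ` {d..z} = {d..s}"
proof -
  have "s \<le> f s" using above \<open>d < s\<close> by simp
  then obtain z where z: "z \<in> {d<..s}" "f z = s" and below: "\<forall>w\<in>{d..<z}. f w < s"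
    using IVT_least_point[OF cont] \<open>d < s\<close> fd by fastforce
  have "f ` {d..z} \<subseteq> {d..s}"
  proof (rule image_subsetI)
    fix w assume w: "w \<in> {d..z}"
    then have "d \<le> f w" using above z by force
    moreover have "f w \<le> s" using w z below by (cases "w = z") (auto intro: less_imp_le)
    ultimately show "f w \<in> {d..s}" by simp
  qed
  moreover have "continuous_on {d..z} f"
    by (rule continuous_on_subset[OF cont]) (use z in auto)
  then have "{d..s} \<subseteq> f ` {d..z}"
    using image_interval_contains_between[of d z f] z fd by auto
  ultimately show ?thesis using z by auto
qed

lemma nested_preimage_intervals:
  fixes f :: "real \<Rightarrow> real"
  assumes cont: "continuous_on {d..s} f" and fd: "f d = d" and "d < s"
    and above: "\<forall>z\<in>{d..s}. z \<le> f z"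
  obtains t where "\<And>n. d < t n \<and> t n \<le> s" and "\<And>n. f (t (Suc n)) = t n"
    and "\<And>n. f ` {d..t (Suc n)} = {d..t n}"
proof -
  have "\<exists>t. \<forall>n. (d < t n \<and> t n \<le> s) \<and> (f (t (Suc n)) = t n \<and> f ` {d..t (Suc n)} = {d..t n})"
  proof (rule dependent_nat_choice)
    show "\<exists>x. d < x \<and> x \<le> s" using \<open>d < s\<close> by blast
  next
    fix x :: real and n :: nat
    assume x: "d < x \<and> x \<le> s"
    have "continuous_on {d..x} f" using cont x by (auto intro: continuous_on_subset)
    then show "\<exists>y. (d < y \<and> y \<le> s) \<and> f y = x \<and> f ` {d..y} = {d..x}"
      using preimage_interval_step[of d x f] fd above x by fastforce
  qed
  then show ?thesis using that by blast
qed

lemma values_attained_beside_if_maps_across: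
  fixes f :: "real \<Rightarrow> real"
  assumes cont: "continuous_on {0..1} f" and d: "d \<in> {0..1}" and fd: "f d = d"
    and y: "y \<in> {0..1}" and across: "maps_across f d y"
    and "d < t" and "d < v" and ft: "f t = v" and "t < max y (f y)" and "v < max y (f y)"
  shows "\<exists>p q. 0 \<le> p \<and> q \<le> 1 \<and> (q \<le> d \<or> t \<le> p) \<and> continuous_on {p..q} f
    \<and> d \<in> f ` {p..q} \<and> v \<in> f ` {p..q}"
proof (cases "d < y")
  case True
  with across have "f y < d" by (auto simp: maps_across_def)
  with True have "t < y" using \<open>t < max y (f y)\<close> by auto
  have cont_side: "continuous_on {t..y} f"
    by (rule continuous_on_subset[OF cont]) (use y d \<open>d < t\<close> in auto)
  then have image_values: "{f y..v} \<subseteq> f ` {t..y}"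
    using image_interval_contains_between[of t y f] \<open>t < y\<close> ft \<open>f y < d\<close> \<open>d < v\<close> by simp
  have "d \<in> {f y..v}" "v \<in> {f y..v}" using \<open>f y < d\<close> \<open>d < v\<close> by auto
  then have "d \<in> f ` {t..y}" "v \<in> f ` {t..y}"
    using image_values by (meson subsetD)+
  moreover have "0 \<le> t" "y \<le> 1" using d y \<open>d < t\<close> by auto
  ultimately show ?thesis using cont_side order.refl[of t] by blast
next
  case False
  with across have "y < d" "d < f y" by (auto simp: maps_across_def)
  then have "v < f y" using \<open>v < max y (f y)\<close> by auto
  have cont_side: "continuous_on {y..d} f"
    by (rule continuous_on_subset[OF cont]) (use y d in auto)
  then have image_values: "{d..f y} \<subseteq> f ` {y..d}"
    using image_interval_contains_between[of y d f] fd \<open>y < d\<close> \<open>d < f y\<close> by simp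
  have "d \<in> {d..f y}" "v \<in> {d..f y}" using \<open>v < f y\<close> \<open>d < v\<close> by auto
  then have "d \<in> f ` {y..d}" "v \<in> f ` {y..d}"
    using image_values by (meson subsetD)+
  moreover have "0 \<le> y" "d \<le> 1" using y d by auto
  ultimately show ?thesis using cont_side order.refl[of d] by blast
qed

lemma interval_onto_if_maps_across:
  fixes f :: "real \<Rightarrow> real"
  assumes "continuous_on {0..1} f" and "d \<in> {0..1}" and "f d = d"
    and "y \<in> {0..1}" and "maps_across f d y"
    and "d < t" and "d < v" and "f t = v" and "t < max y (f y)" and "v < max y (f y)"
  shows "\<exists>a b. 0 \<le> a \<and> a < b \<and> b \<le> 1 \<and> {a..b} \<inter> {d..t} \<subseteq> {d, t} \<and> f ` {a..b} = {d..v}"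
proof -
  obtain p q where pq: "0 \<le> p" "q \<le> 1" "q \<le> d \<or> t \<le> p"
    and "continuous_on {p..q} f" "d \<in> f ` {p..q}" "v \<in> f ` {p..q}"
    using values_attained_beside_if_maps_across[OF assms] by blast
  then obtain a b where "p \<le> a" "a < b" "b \<le> q" "f ` {a..b} = {d..v}"
    using subinterval_with_image[of p q f d v] \<open>d < v\<close> by blast
  moreover have "{a..b} \<inter> {d..t} \<subseteq> {d, t}"
    using pq(3) \<open>p \<le> a\<close> \<open>b \<le> q\<close> by auto
  ultimately show ?thesis using pq(1,2) by (intro exI[of _ a] exI[of _ b]) simp
qed

lemma admits_splitting_sequence_if_maps_across_right:
  fixes f :: "real \<Rightarrow> real"
  assumes cont: "continuous_on {0..1} f" and "0 \<le> d" and "d < e" and "e \<le> 1" and fd: "f d = d"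
    and above: "\<forall>z\<in>{d..e}. z \<le> f z" and y: "y \<in> {0..1}" and across: "maps_across f d y"
  shows "admits_splitting_sequence f"
proof -
  \<comment> \<open>Keeping all t n below max y (f y) is what lets y witness the splitting.\<close>
  define s where "s = (d + min e (max y (f y))) / 2"
  have "d < max y (f y)" using across by (auto simp: maps_across_def)
  then have s: "d < s" "s < e" "s < max y (f y)" using \<open>d < e\<close> by (auto simp: s_def)
  have "continuous_on {d..s} f"
    by (rule continuous_on_subset[OF cont]) (use s \<open>0 \<le> d\<close> \<open>e \<le> 1\<close> in auto)
  moreover have "\<forall>z\<in>{d..s}. z \<le> f z" using above s by auto
  ultimately obtain t where t: "\<And>n. d < t n \<and> t n \<le> s" and t_step: "\<And>n. f (t (Suc n)) = t n"
    and t_image: "\<And>n. f ` {d..t (Suc n)} = {d..t n}"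
    using nested_preimage_intervals[of d s f] fd s by blast
  \<comment> \<open>The index shift makes the image of every term of the tight sequence known, including the first.\<close>
  have tight: "tight f (\<lambda>n. d) (\<lambda>n. t (Suc n))"
    unfolding tight_def
  proof (intro conjI allI)
    fix n
    have "t (Suc n) < 1" using t[of "Suc n"] s \<open>e \<le> 1\<close> by linarith
    then show "0 \<le> d" "d \<le> t (Suc n)" "t (Suc n) \<le> 1" "{d..t (Suc n)} \<noteq> {0..1}"
      using \<open>0 \<le> d\<close> t[of "Suc n"] by auto
    show "f ` {d..t (Suc (Suc n))} = {d..t (Suc n)}" by (rule t_image)
  next
    show "\<exists>M. \<forall>n\<ge>M. d < t (Suc n)" using t by blast
  qed
  have splitting_intervals: "\<exists>a b. 0 \<le> a \<and> a < b \<and> b \<le> 1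
      \<and> {a..b} \<inter> {d..t (Suc n)} \<subseteq> {d, t (Suc n)} \<and> f ` {a..b} = f ` {d..t (Suc n)}" for n
    using interval_onto_if_maps_across[OF cont _ fd y across, of "t (Suc n)" "t n"]
      t[of n] t[of "Suc n"] t_step[of n] t_image[of n] s \<open>0 \<le> d\<close> \<open>d < e\<close> \<open>e \<le> 1\<close>
    by simp
  show ?thesis
    using tight by (rule admits_splitting_sequenceI[where N = UNIV]) (simp, rule splitting_intervals)
qed

lemma image_reflected_interval:
  fixes f :: "real \<Rightarrow> real"
  shows "f ` {1 - q..1 - p} = (\<lambda>z. 1 - z) ` ((\<lambda>z. 1 - f (1 - z)) ` {p..q})"
proof -
  have "f ` {1 - q..1 - p} = f ` ((\<lambda>z. 1 - z) ` {p..q})" by simp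
  then show ?thesis unfolding image_image by simp
qed

lemma tight_reflect:
  fixes f :: "real \<Rightarrow> real"
  assumes "tight (\<lambda>z. 1 - f (1 - z)) l r"
  shows "tight f (\<lambda>n. 1 - r n) (\<lambda>n. 1 - l n)"
  unfolding tight_def
proof (intro conjI allI)
  fix n
  have lr: "0 \<le> l n" "l n \<le> r n" "r n \<le> 1" "{l n..r n} \<noteq> {0..1}"
    and step: "(\<lambda>z. 1 - f (1 - z)) ` {l (Suc n)..r (Suc n)} = {l n..r n}"
    using assms by (auto simp: tight_def)
  show "0 \<le> 1 - r n" "1 - r n \<le> 1 - l n" "1 - l n \<le> 1" using lr by auto
  show "{1 - r n..1 - l n} \<noteq> {0..1}" using lr by (simp add: Icc_eq_Icc) blast
  show "f ` {1 - r (Suc n)..1 - l (Suc n)} = {1 - r n..1 - l n}"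
    by (simp add: image_reflected_interval step)
next
  show "\<exists>M. \<forall>n\<ge>M. 1 - r n < 1 - l n" using assms by (auto simp: tight_def)
qed

lemma splitting_sequence_reflect:
  fixes f :: "real \<Rightarrow> real"
  assumes "splitting_sequence (\<lambda>z. 1 - f (1 - z)) l r"
  shows "splitting_sequence f (\<lambda>n. 1 - r n) (\<lambda>n. 1 - l n)"
proof -
  obtain N a b where "infinite N" and ab: "\<forall>n\<in>N. 0 \<le> a n \<and> a n < b n \<and> b n \<le> 1
      \<and> {a n..b n} \<inter> {l n..r n} \<subseteq> {l n, r n}
      \<and> (\<lambda>z. 1 - f (1 - z)) ` {a n..b n} = (\<lambda>z. 1 - f (1 - z)) ` {l n..r n}"
    using assms unfolding splitting_sequence_def by blast
  have "0 \<le> 1 - b n \<and> 1 - b n < 1 - a n \<and> 1 - a n \<le> 1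
      \<and> {1 - b n..1 - a n} \<inter> {1 - r n..1 - l n} \<subseteq> {1 - r n, 1 - l n}
      \<and> f ` {1 - b n..1 - a n} = f ` {1 - r n..1 - l n}" if "n \<in> N" for n
  proof -
    have "{1 - b n..1 - a n} \<inter> {1 - r n..1 - l n} \<subseteq> {1 - r n, 1 - l n}"
    proof
      fix z assume "z \<in> {1 - b n..1 - a n} \<inter> {1 - r n..1 - l n}"
      then have "1 - z \<in> {a n..b n} \<inter> {l n..r n}" by auto
      then have "1 - z \<in> {l n, r n}" using ab that by blast
      then show "z \<in> {1 - r n, 1 - l n}" by auto
    qed
    moreover have "f ` {1 - b n..1 - a n} = f ` {1 - r n..1 - l n}"
      using ab that by (simp add: image_reflected_interval)
    ultimately show ?thesis using ab that by simp
  qed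
  moreover have "tight f (\<lambda>n. 1 - r n) (\<lambda>n. 1 - l n)"
    by (rule tight_reflect) (use assms in \<open>simp add: splitting_sequence_def\<close>)
  ultimately show ?thesis
    unfolding splitting_sequence_def using \<open>infinite N\<close>
    by (intro conjI exI[of _ N] exI[of _ "\<lambda>n. 1 - b n"] exI[of _ "\<lambda>n. 1 - a n"]) simp_all
qed

lemma admits_splitting_sequence_if_maps_across_left:
  fixes f :: "real \<Rightarrow> real"
  assumes cont: "continuous_on {0..1} f" and "0 \<le> c" and "c < d" and "d \<le> 1" and fd: "f d = d"
    and below: "\<forall>z\<in>{c..d}. f z \<le> z" and y: "y \<in> {0..1}" and across: "maps_across f d y"
  shows "admits_splitting_sequence f"
proof -
  define g where "g z = 1 - f (1 - z)" for z
  have "continuous_on {0..1} g"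
    unfolding g_def by (intro continuous_intros continuous_on_compose2[OF cont]) auto
  then have "admits_splitting_sequence g"
  proof (rule admits_splitting_sequence_if_maps_across_right)
    show "0 \<le> 1 - d" "1 - d < 1 - c" "1 - c \<le> 1" "1 - y \<in> {0..1}"
      using assms(2-4) y by auto
    show "g (1 - d) = 1 - d" "maps_across g (1 - d) (1 - y)"
      using fd across by (auto simp: g_def maps_across_def)
    show "\<forall>z\<in>{1 - d..1 - c}. z \<le> g z"
    proof
      fix z assume "z \<in> {1 - d..1 - c}"
      then have "f (1 - z) \<le> 1 - z" using below by simp
      then show "z \<le> g z" by (simp add: g_def)
    qed
  qed
  then obtain l r where "splitting_sequence g l r"
    unfolding admits_splitting_sequence_def by blast
  then have "splitting_sequence f (\<lambda>n. 1 - r n) (\<lambda>n. 1 - l n)"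
    unfolding g_def by (rule splitting_sequence_reflect)
  then show ?thesis unfolding admits_splitting_sequence_def by blast
qed

lemma S_M_W_type_repelling_side:
  assumes "S_type f d \<or> M_type f d \<or> W_type f d"
  shows "(\<exists>e. d < e \<and> e \<le> 1 \<and> (\<forall>z\<in>{d..e}. z \<le> f z))
    \<or> (\<exists>c. 0 \<le> c \<and> c < d \<and> (\<forall>z\<in>{c..d}. f z \<le> z))"
proof -
  from assms obtain c e where frame: "fp_frame f c d e"
    and "(\<forall>z\<in>{d..e}. z \<le> f z) \<or> (\<forall>z\<in>{c..d}. f z \<le> z)"
    unfolding S_type_def M_type_def W_type_def by fastforce
  with frame show ?thesis unfolding fp_frame_def by blast
qed

lemma not_maps_across_if_no_splitting:
  assumes "continuous_on {0..1} f" and "\<not> admits_splitting_sequence f"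
    and "d \<in> {0..1}" and "f d = d" and "S_type f d \<or> M_type f d \<or> W_type f d"
    and "y \<in> {0..1}"
  shows "\<not> maps_across f d y"
  using S_M_W_type_repelling_side[OF assms(5)] assms(1-4,6)
    admits_splitting_sequence_if_maps_across_right[of f d _ y]
    admits_splitting_sequence_if_maps_across_left[of f _ d y]
  by auto

lemma invlim_backward_invariant:
  assumes "x \<in> invlim f" and "\<And>y. y \<in> {0..1} \<Longrightarrow> y \<in> A \<Longrightarrow> f y \<in> A"
    and "k \<le> m" and "x m \<in> A"
  shows "x k \<in> A"
  using \<open>k \<le> m\<close> \<open>x m \<in> A\<close>
proof (induction k rule: inc_induct)
  case (step n)
  with assms(1,2) show ?case unfolding invlim_def by force
qed

lemma invlim_eq_Un_if_sides_invariant: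
  assumes below: "\<And>y. y \<in> {0..1} \<Longrightarrow> y \<le> d \<Longrightarrow> f y \<le> d"
    and above: "\<And>y. y \<in> {0..1} \<Longrightarrow> d \<le> y \<Longrightarrow> d \<le> f y"
  shows "invlim f = invlim_on {0..d} f \<union> invlim_on {d..1} f"
proof (intro equalityI subsetI)
  fix x assume x: "x \<in> invlim f"
  have "(\<forall>n. x n \<le> d) \<or> (\<forall>n. d \<le> x n)"
  proof (rule ccontr)
    assume "\<not> ?thesis"
    then obtain i j where "d < x i" "x j < d" by (auto simp: not_le)
    moreover have "x i \<in> {..d}" if "x (max i j) \<in> {..d}"
      using invlim_backward_invariant[OF x _ max.cobounded1 that] below by simp
    moreover have "x j \<in> {d..}" if "x (max i j) \<in> {d..}"
      using invlim_backward_invariant[OF x _ max.cobounded2 that] above by simp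
    ultimately show False by (cases "x (max i j) \<le> d") auto
  qed
  with x show "x \<in> invlim_on {0..d} f \<union> invlim_on {d..1} f"
    by (auto simp: invlim_on_def invlim_def)
qed (auto simp: invlim_on_def)

lemma invlim_on_Int_eq_fixed_point:
  assumes "d \<in> {0..1}" and "f d = d"
  shows "invlim_on {0..d} f \<inter> invlim_on {d..1} f = {(\<lambda>n. d)}"
  using assms by (auto simp: invlim_on_def invlim_def intro!: ext order.antisym)

theorem lemma4p3:
  fixes f :: "real \<Rightarrow> real" and d :: real
  assumes "continuous_on {0..1} f"
    and "f ` {0..1} = {0..1}"
    and "\<not> admits_splitting_sequence f"
    and "d \<in> {0..1}" and "f d = d"
    and "S_type f d \<or> M_type f d \<or> W_type f d"
  shows "invlim f = invlim_on {0..d} f \<union> invlim_on {d..1} f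
    \<and> invlim_on {0..d} f \<inter> invlim_on {d..1} f = {(\<lambda>n. d)}"
proof
  have "\<not> maps_across f d y" if "y \<in> {0..1}" for y
    using not_maps_across_if_no_splitting assms(1,3-6) that by blast
  then show "invlim f = invlim_on {0..d} f \<union> invlim_on {d..1} f"
    using \<open>f d = d\<close> by (intro invlim_eq_Un_if_sides_invariant) (force simp: maps_across_def)+
  show "invlim_on {0..d} f \<inter> invlim_on {d..1} f = {(\<lambda>n. d)}"
    using assms(4,5) by (rule invlim_on_Int_eq_fixed_point)
qed

end
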